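(* Suppose every agent is either of type P or does not satisfy (M). If there is an agent $i$ of type P and $\chi(0)\in\Delta_{A-1}^o$ such that $$\limsup_{N\to\infty}\frac{\sum_{k=\chi_i(0)N}^\infty 1/F_i(k)}{\sum_{k=\chi_j(0)N}^\infty 1/F_j(k)}<1\quad\text{for all }j\ne i,$$ then $\lim_{N\to\infty}\mathbb{P}(sMon_i(\chi(0),N))=1$.
   Context: Fix $A\ge 2$, $[A]=\{1,\dots,A\}$, and feedback functions $F_i:\mathbb{N}\to(0,\infty)$. The generalized Pólya urn is the Markov chain $X(n)\in\mathbb{N}^A$, $n\in\mathbb{N}_0$, with $X_i(0)\ge1$ and $\mathbb{P}(X(n+1)=X(n)+e^{(i)}\mid X(n))=F_i(X_i(n))/\sum_{j}F_j(X_j(n))$. $N=\sum_iX_i(0)$; $\Delta_{A-1}^o$ is the interior of the simplex $\{x\in[0,1]^A:\sum x_i=1\}$. For fixed $\chi(0)\in\Delta_{A-1}^o$ the process starts from $X_i(0)=\chi_i(0)N$ (rounded; sums with non-integer lower limit start at the rounded value). Strong monopoly: $sMon_i(\chi(0),N)=\{\lim_{n\to\infty}\sum_{j\ne i}X_j(n)<\infty\}$. Condition (M) for agent $i$: $\sum_{k\ge1}1/F_i(k)<\infty$ (if it fails, the denominator sum above is $+\infty$). Agent $i$ is of type P if it satisfies (M) and $\lim_{k\to\infty}F_i(k)\sum_{l=k}^\infty1/F_i(l)=\infty$. *)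

theory Defs
  imports "HOL-Probability.Probability"
begin

text \<open>Agents are the indices 1..A. Feedback functions: F i k, meaningful for k >= 1.
  Urn configurations are functions nat => nat (only entries 1..A matter).\<close>

definition condM :: "(nat \<Rightarrow> nat \<Rightarrow> real) \<Rightarrow> nat \<Rightarrow> bool" where
  "condM F i \<longleftrightarrow> summable (\<lambda>k. 1 / F i (Suc k))"

definition typeP :: "(nat \<Rightarrow> nat \<Rightarrow> real) \<Rightarrow> nat \<Rightarrow> bool" where
  "typeP F i \<longleftrightarrow> condM F i \<and>
     filterlim (\<lambda>k. F i k * (\<Sum>l. 1 / F i (l + k))) at_top sequentially"

text \<open>Tail sum of 1/F_i from m on, valued in the extended reals (= infinity if (M) fails).\<close>
definition tail_sum :: "(nat \<Rightarrow> nat \<Rightarrow> real) \<Rightarrow> nat \<Rightarrow> nat \<Rightarrow> ereal" where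
  "tail_sum F i m = (\<Sum>l. ereal (1 / F i (l + m)))"

definition urn_init :: "(nat \<Rightarrow> real) \<Rightarrow> nat \<Rightarrow> nat \<Rightarrow> nat" where
  "urn_init chi N i = nat (round (chi i * real N))"

definition urn_prob :: "nat \<Rightarrow> (nat \<Rightarrow> nat \<Rightarrow> real) \<Rightarrow> (nat \<Rightarrow> nat) \<Rightarrow> nat \<Rightarrow> real" where
  "urn_prob A F x i = F i (x i) / (\<Sum>j=1..A. F j (x j))"

text \<open>X is (a realisation on the probability space M of) the generalized Polya urn
  started at x0: the finite-dimensional path probabilities are those of the Markov chain.\<close>
definition is_urn_process ::
  "nat \<Rightarrow> (nat \<Rightarrow> nat \<Rightarrow> real) \<Rightarrow> 'w measure \<Rightarrow> (nat \<Rightarrow> 'w \<Rightarrow> (nat \<Rightarrow> nat)) \<Rightarrow> (nat \<Rightarrow> nat) \<Rightarrow> bool" where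
  "is_urn_process A F M X x0 \<longleftrightarrow>
     prob_space M \<and>
     (\<forall>n. X n \<in> measurable M (count_space UNIV)) \<and>
     measure M {\<omega>\<in>space M. X 0 \<omega> = x0} = 1 \<and>
     (\<forall>n h i. i \<in> {1..A} \<longrightarrow>
        measure M {\<omega>\<in>space M. (\<forall>m\<le>n. X m \<omega> = h m) \<and> X (Suc n) \<omega> = (h n)(i := h n i + 1)}
        = measure M {\<omega>\<in>space M. \<forall>m\<le>n. X m \<omega> = h m} * urn_prob A F (h n) i)"

definition sMon :: "nat \<Rightarrow> nat \<Rightarrow> 'w measure \<Rightarrow> (nat \<Rightarrow> 'w \<Rightarrow> (nat \<Rightarrow> nat)) \<Rightarrow> 'w set" where
  "sMon A i M X = {\<omega>\<in>space M. \<exists>L::real.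
      (\<lambda>n. real (\<Sum>j\<in>{1..A}-{i}. X n \<omega> j)) \<longlonglongrightarrow> L}"

end

theory Submission
  imports Defs
begin

text \<open>Agent \<open>i\<close> fails to become a strong monopoly only if the count of some other agent \<open>j\<close>
  grows without bound, and the probability of that event is controlled by nonnegative
  superharmonic functions \<open>W\<close> of the urn: \<open>E W(X n) \<le> W(X 0)\<close>, so by Markov's inequality
  \<open>P(X j unbounded) \<le> W(X 0) / t\<close> whenever \<open>W \<ge> t\<close> on configurations with \<open>x j\<close> large.
  If \<open>1/F j\<close> is not summable, the (capped) partial sums of \<open>1/F j\<close> minus those of \<open>1/F i\<close> give
  such a \<open>W\<close> with arbitrarily large threshold, so \<open>X j\<close> stays bounded almost surely.
  If \<open>1/F j\<close> is summable, write \<open>R\<close> for the tail sums of \<open>1/F\<close> and \<open>T\<close> for those of \<open>1/F\<^sup>2\<close>;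
  with \<open>D = R j (X j 0) - R i (X i 0)\<close> the function
  \<open>(R j (x j) - R i (x i) - D)\<^sup>2 + T j (x j) + T i (x i)\<close> is harmonic. It starts at
  \<open>T j + T i\<close>, which is \<open>o(R\<^sup>2)\<close> for agents of type P, and exceeds \<open>D\<^sup>2/4\<close> once \<open>x j\<close> is large,
  while the limsup hypothesis keeps \<open>D \<ge> (1 - c) R j\<close>. Hence the bound tends to \<open>0\<close>
  as \<open>N \<rightarrow> \<infinity>\<close>.\<close>

definition path_config :: "(nat \<Rightarrow> nat) \<Rightarrow> nat list \<Rightarrow> nat \<Rightarrow> nat \<Rightarrow> nat" where
  "path_config x0 ks m = (\<lambda>j. x0 j + count_list (take m ks) j)"

definition draw_seqs :: "nat \<Rightarrow> nat \<Rightarrow> nat list set" where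
  "draw_seqs A n = {ks. length ks = n \<and> set ks \<subseteq> {1..A}}"

lemma path_config_0 [simp]: "path_config x0 ks 0 = x0"
  by (simp add: path_config_def)

lemma path_config_snoc: "m \<le> length ks \<Longrightarrow> path_config x0 (ks @ [k]) m = path_config x0 ks m"
  by (simp add: path_config_def)

lemma path_config_snoc_length:
  "path_config x0 (ks @ [k]) (Suc (length ks)) =
     (path_config x0 ks (length ks))(k := path_config x0 ks (length ks) k + 1)"
  by (auto simp: path_config_def fun_eq_iff)

lemma count_list_take_mono: "m \<le> m' \<Longrightarrow> count_list (take m xs) x \<le> count_list (take m' xs) x"
  by (metis count_list_append le_add1 le_add_diff_inverse take_add)

lemma path_config_mono: "m \<le> m' \<Longrightarrow> path_config x0 ks m j \<le> path_config x0 ks m' j"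
  by (simp add: path_config_def count_list_take_mono)

lemma path_config_ge_init: "x0 j \<le> path_config x0 ks m j"
  by (simp add: path_config_def)

lemma finite_draw_seqs: "finite (draw_seqs A n)"
  using finite_lists_length_eq[of "{1..A}" n] by (simp add: draw_seqs_def conj_commute)

lemma draw_seqs_0: "draw_seqs A 0 = {[]}"
  by (auto simp: draw_seqs_def)

lemma draw_seqs_Suc: "draw_seqs A (Suc n) = (\<lambda>(ks, k). ks @ [k]) ` (draw_seqs A n \<times> {1..A})"
proof
  show "draw_seqs A (Suc n) \<subseteq> (\<lambda>(ks, k). ks @ [k]) ` (draw_seqs A n \<times> {1..A})"
  proof
    fix xs assume xs: "xs \<in> draw_seqs A (Suc n)"
    then have "xs \<noteq> []"
      by (auto simp: draw_seqs_def)
    then have "xs = butlast xs @ [last xs]" "last xs \<in> set xs"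
      by simp_all
    with xs show "xs \<in> (\<lambda>(ks, k). ks @ [k]) ` (draw_seqs A n \<times> {1..A})"
      by (auto simp: draw_seqs_def dest: in_set_butlastD
          intro!: image_eqI[where x = "(butlast xs, last xs)"])
  qed
qed (auto simp: draw_seqs_def)

lemma sum_draw_seqs_Suc:
  "(\<Sum>ks\<in>draw_seqs A (Suc n). f ks) = (\<Sum>ks\<in>draw_seqs A n. \<Sum>k\<in>{1..A}. f (ks @ [k]))"
proof -
  have "inj_on (\<lambda>(ks, k). ks @ [k]) (draw_seqs A n \<times> {1..A})"
    by (auto simp: inj_on_def)
  then show ?thesis
    by (simp add: draw_seqs_Suc sum.reindex sum.cartesian_product case_prod_unfold)
qed

section \<open>Superharmonic functions of the urn\<close>

definition unbounded_event :: "'w measure \<Rightarrow> (nat \<Rightarrow> 'w \<Rightarrow> nat \<Rightarrow> nat) \<Rightarrow> nat \<Rightarrow> 'w set" where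
  "unbounded_event M X j = {\<omega>\<in>space M. \<forall>B. \<exists>n. B < X n \<omega> j}"

locale polya_urn =
  fixes A :: nat and F :: "nat \<Rightarrow> nat \<Rightarrow> real" and M :: "'w measure"
    and X :: "nat \<Rightarrow> 'w \<Rightarrow> nat \<Rightarrow> nat" and x0 :: "nat \<Rightarrow> nat"
  assumes urn_process: "is_urn_process A F M X x0"
    and F_pos: "\<And>j k. j \<in> {1..A} \<Longrightarrow> k \<ge> 1 \<Longrightarrow> F j k > 0"
    and x0_pos: "\<And>j. j \<in> {1..A} \<Longrightarrow> x0 j \<ge> 1"
    and A_pos: "A \<ge> 1"
begin

sublocale prob_space M
  using urn_process by (simp add: is_urn_process_def)

lemma X_measurable [measurable]: "X n \<in> measurable M (count_space UNIV)"
  using urn_process by (simp add: is_urn_process_def)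

lemma sets_Collect_X: "{\<omega>\<in>space M. P (X n \<omega>)} \<in> sets M"
  using measurable_sets[OF X_measurable, of "{x. P x}" n] by (simp add: vimage_def Int_def conj_commute)

definition path_event :: "nat list \<Rightarrow> 'w set" where
  "path_event ks = {\<omega>\<in>space M. \<forall>m\<le>length ks. X m \<omega> = path_config x0 ks m}"

definition above_init :: "(nat \<Rightarrow> nat) \<Rightarrow> bool" where
  "above_init x \<longleftrightarrow> (\<forall>l. x0 l \<le> x l)"

definition superharmonic :: "((nat \<Rightarrow> nat) \<Rightarrow> real) \<Rightarrow> bool" where
  "superharmonic W \<longleftrightarrow>
     (\<forall>x. above_init x \<longrightarrow> (\<Sum>k\<in>{1..A}. urn_prob A F x k * W (x(k := x k + 1))) \<le> W x)"

lemma path_event_sets [measurable]: "path_event ks \<in> sets M"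
  unfolding path_event_def by measurable

lemma above_init_path_config: "above_init (path_config x0 ks m)"
  by (simp add: above_init_def path_config_ge_init)

lemma above_init_ge_1: "above_init x \<Longrightarrow> j \<in> {1..A} \<Longrightarrow> x j \<ge> 1"
  using x0_pos unfolding above_init_def by (meson order_trans)

lemma F_pos_above_init: "above_init x \<Longrightarrow> j \<in> {1..A} \<Longrightarrow> F j (x j) > 0"
  using F_pos above_init_ge_1 by blast

lemma urn_prob_sum: "above_init x \<Longrightarrow> (\<Sum>k\<in>{1..A}. urn_prob A F x k) = 1"
proof -
  assume x: "above_init x"
  have "1 \<in> {1..A}" using A_pos by auto
  then have "(\<Sum>j=1..A. F j (x j)) > 0"
    using F_pos_above_init[OF x] by (intro sum_pos) auto
  then show ?thesis
    unfolding urn_prob_def by (simp add: sum_divide_distrib[symmetric])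
qed

lemma path_event_snoc:
  "ks \<in> draw_seqs A n \<Longrightarrow> path_event (ks @ [k]) =
     {\<omega>\<in>space M. (\<forall>m\<le>n. X m \<omega> = path_config x0 ks m)
        \<and> X (Suc n) \<omega> = (path_config x0 ks n)(k := path_config x0 ks n k + 1)}"
  unfolding path_event_def draw_seqs_def
  using path_config_snoc[of _ ks x0 k] path_config_snoc_length[of x0 ks k]
  by (auto simp: le_Suc_eq)

lemma path_event_draw_seqs:
  "ks \<in> draw_seqs A n \<Longrightarrow> path_event ks = {\<omega>\<in>space M. \<forall>m\<le>n. X m \<omega> = path_config x0 ks m}"
  by (simp add: path_event_def draw_seqs_def)

lemma measure_path_event_snoc:
  "ks \<in> draw_seqs A n \<Longrightarrow> k \<in> {1..A} \<Longrightarrow>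
     measure M (path_event (ks @ [k])) = measure M (path_event ks) * urn_prob A F (path_config x0 ks n) k"
  using urn_process unfolding is_urn_process_def path_event_snoc path_event_draw_seqs by blast

lemma path_event_snoc_subset: "path_event (ks @ [k]) \<subseteq> path_event ks"
  unfolding path_event_def using path_config_snoc[of _ ks x0 k] by auto

lemma measure_path_event_Nil: "measure M (path_event []) = 1"
  using urn_process unfolding path_event_def is_urn_process_def by simp

text \<open>The process is only specified through its path probabilities, so \<open>E W(X n)\<close> is computed as a
  finite sum over the draw sequences of length \<open>n\<close>; their path events cover \<open>space M\<close> up to a null
  set (\<open>measure_not_follows_paths\<close>).\<close>

definition path_expectation :: "nat \<Rightarrow> ((nat \<Rightarrow> nat) \<Rightarrow> real) \<Rightarrow> real" where
  "path_expectation n W = (\<Sum>ks\<in>draw_seqs A n. measure M (path_event ks) * W (path_config x0 ks n))"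

lemma path_expectation_Suc_le:
  assumes "superharmonic W"
  shows "path_expectation (Suc n) W \<le> path_expectation n W"
proof -
  have "path_expectation (Suc n) W =
      (\<Sum>ks\<in>draw_seqs A n. \<Sum>k\<in>{1..A}.
         measure M (path_event (ks @ [k])) * W (path_config x0 (ks @ [k]) (Suc n)))"
    unfolding path_expectation_def sum_draw_seqs_Suc ..
  also have "\<dots> = (\<Sum>ks\<in>draw_seqs A n. measure M (path_event ks) *
      (\<Sum>k\<in>{1..A}. urn_prob A F (path_config x0 ks n) k *
         W ((path_config x0 ks n)(k := path_config x0 ks n k + 1))))"
    using measure_path_event_snoc path_config_snoc_length
    by (intro sum.cong refl) (auto simp: sum_distrib_left draw_seqs_def intro!: sum.cong)
  also have "\<dots> \<le> path_expectation n W"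
    unfolding path_expectation_def using assms above_init_path_config
    by (intro sum_mono mult_left_mono) (auto simp: superharmonic_def)
  finally show ?thesis .
qed

lemma path_expectation_le_init:
  assumes "superharmonic W"
  shows "path_expectation n W \<le> W x0"
proof (induction n)
  case 0
  then show ?case by (simp add: path_expectation_def draw_seqs_0 measure_path_event_Nil)
next
  case (Suc n)
  then show ?case using path_expectation_Suc_le[OF assms, of n] by linarith
qed

definition follows_paths :: "nat \<Rightarrow> 'w set" where
  "follows_paths n = (\<Union>ks\<in>draw_seqs A n. path_event ks)"

lemma follows_paths_sets [measurable]: "follows_paths n \<in> sets M"
  unfolding follows_paths_def using finite_draw_seqs by (intro sets.finite_UN) auto

lemma measure_path_event_not_extended:
  assumes ks: "ks \<in> draw_seqs A n"
  shows "measure M (path_event ks - (\<Union>k\<in>{1..A}. path_event (ks @ [k]))) = 0"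
proof -
  have "disjoint_family_on (\<lambda>k. path_event (ks @ [k])) {1..A}"
    unfolding disjoint_family_on_def path_event_snoc[OF ks]
    by (auto simp: fun_eq_iff)
  then have "measure M (\<Union>k\<in>{1..A}. path_event (ks @ [k])) =
      (\<Sum>k\<in>{1..A}. measure M (path_event (ks @ [k])))"
    by (intro finite_measure_finite_Union) auto
  also have "\<dots> = measure M (path_event ks)"
    using measure_path_event_snoc[OF ks] urn_prob_sum[OF above_init_path_config]
    by (simp add: sum_distrib_left[symmetric])
  finally show ?thesis
    using path_event_snoc_subset by (subst finite_measure_Diff) auto
qed

lemma measure_not_follows_paths: "measure M (space M - follows_paths n) = 0"
proof (induction n)
  case 0
  then show ?case
    using measure_path_event_Nil prob_compl[OF path_event_sets]
    by (simp add: follows_paths_def draw_seqs_0)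
next
  case (Suc n)
  let ?rest = "\<Union>ks\<in>draw_seqs A n. path_event ks - (\<Union>k\<in>{1..A}. path_event (ks @ [k]))"
  have "space M - follows_paths (Suc n) \<subseteq> (space M - follows_paths n) \<union> ?rest"
    unfolding follows_paths_def draw_seqs_Suc by auto
  then have "measure M (space M - follows_paths (Suc n)) \<le> measure M (space M - follows_paths n) + measure M ?rest"
    using finite_draw_seqs by (intro order.trans[OF finite_measure_mono measure_Un_le]) auto
  also have "measure M ?rest \<le> (\<Sum>ks\<in>draw_seqs A n. measure M (path_event ks - (\<Union>k\<in>{1..A}. path_event (ks @ [k]))))"
    using finite_draw_seqs by (intro measure_UNION_le) auto
  also have "\<dots> = 0"
    using measure_path_event_not_extended by simp
  finally show ?case
    using Suc measure_nonneg[of M "space M - follows_paths (Suc n)"] by linarith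
qed

lemma prob_superharmonic_ge:
  assumes W: "superharmonic W" and W_nonneg: "\<And>x. above_init x \<Longrightarrow> W x \<ge> 0" and t: "t > 0"
  shows "measure M {\<omega>\<in>space M. t \<le> W (X n \<omega>)} \<le> W x0 / t"
proof -
  let ?H = "{ks\<in>draw_seqs A n. t \<le> W (path_config x0 ks n)}"
  have "{\<omega>\<in>space M. t \<le> W (X n \<omega>)} \<subseteq> (space M - follows_paths n) \<union> (\<Union>ks\<in>?H. path_event ks)"
    unfolding follows_paths_def by (auto simp: path_event_draw_seqs)
  then have "measure M {\<omega>\<in>space M. t \<le> W (X n \<omega>)} \<le>
      measure M (space M - follows_paths n) + measure M (\<Union>ks\<in>?H. path_event ks)"
    using finite_draw_seqs by (intro order.trans[OF finite_measure_mono measure_Un_le]) auto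
  also have "measure M (\<Union>ks\<in>?H. path_event ks) \<le> (\<Sum>ks\<in>?H. measure M (path_event ks))"
    using finite_draw_seqs by (intro measure_UNION_le) auto
  also have "\<dots> \<le> (\<Sum>ks\<in>?H. measure M (path_event ks) * (W (path_config x0 ks n) / t))"
  proof (rule sum_mono)
    fix ks assume "ks \<in> ?H"
    then have "1 \<le> W (path_config x0 ks n) / t"
      using t by simp
    then show "measure M (path_event ks) \<le> measure M (path_event ks) * (W (path_config x0 ks n) / t)"
      by (metis measure_nonneg mult.right_neutral mult_left_mono)
  qed
  also have "\<dots> \<le> (\<Sum>ks\<in>draw_seqs A n. measure M (path_event ks) * (W (path_config x0 ks n) / t))"
    using finite_draw_seqs W_nonneg above_init_path_config t by (intro sum_mono2) auto
  also have "\<dots> = path_expectation n W / t"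
    unfolding path_expectation_def by (simp add: sum_divide_distrib)
  also have "\<dots> \<le> W x0 / t"
    using path_expectation_le_init[OF W] t by (simp add: divide_right_mono)
  finally show ?thesis
    using measure_not_follows_paths by simp
qed

definition typical :: "'w set" where
  "typical = (\<Inter>n. follows_paths n)"

lemma typical_sets [measurable]: "typical \<in> sets M"
  unfolding typical_def by measurable

lemma measure_not_typical: "measure M (space M - typical) = 0"
proof -
  have "measure M (\<Union>n. space M - follows_paths n) = 0"
    using measure_not_follows_paths by (intro measure_countably_zero) auto
  moreover have "space M - typical = (\<Union>n. space M - follows_paths n)"
    unfolding typical_def by auto
  ultimately show ?thesis
    by simp
qed

lemma typical_path_config:
  assumes "\<omega> \<in> typical"
  obtains ks where "X n \<omega> = path_config x0 ks n" "X (Suc n) \<omega> = path_config x0 ks (Suc n)"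
proof -
  from assms obtain ks where "ks \<in> draw_seqs A (Suc n)" "\<omega> \<in> path_event ks"
    unfolding typical_def follows_paths_def by blast
  then show ?thesis
    using that by (auto simp: path_event_draw_seqs)
qed

lemma typical_above_init: "\<omega> \<in> typical \<Longrightarrow> above_init (X n \<omega>)"
  by (metis typical_path_config above_init_path_config)

lemma typical_mono: "\<omega> \<in> typical \<Longrightarrow> n \<le> n' \<Longrightarrow> X n \<omega> j \<le> X n' \<omega> j"
  using lift_Suc_mono_le[of "\<lambda>n. X n \<omega> j"]
  by (metis typical_path_config path_config_mono le_SucI order_refl)

lemma unbounded_event_sets [measurable]: "unbounded_event M X j \<in> sets M"
proof -
  have "unbounded_event M X j = (\<Inter>B. \<Union>n. {\<omega>\<in>space M. B < X n \<omega> j})"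
    by (auto simp: unbounded_event_def)
  also have "\<dots> \<in> sets M"
    using sets_Collect_X[of "\<lambda>x. _ < x j"] by blast
  finally show ?thesis .
qed

lemma unbounded_event_subset:
  assumes threshold: "\<And>x. above_init x \<Longrightarrow> K \<le> x j \<Longrightarrow> t \<le> W x"
  shows "unbounded_event M X j \<subseteq>
    (space M - typical) \<union> (\<Union>N. \<Inter>n\<in>{N..}. {\<omega>\<in>space M. t \<le> W (X n \<omega>)})"
proof
  fix \<omega> assume unb: "\<omega> \<in> unbounded_event M X j"
  show "\<omega> \<in> (space M - typical) \<union> (\<Union>N. \<Inter>n\<in>{N..}. {\<omega>\<in>space M. t \<le> W (X n \<omega>)})"
  proof (cases "\<omega> \<in> typical")
    case True
    from unb obtain N where "K < X N \<omega> j"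
      unfolding unbounded_event_def by blast
    have "t \<le> W (X n \<omega>)" if "n \<ge> N" for n
    proof (rule threshold[OF typical_above_init[OF True]])
      show "K \<le> X n \<omega> j"
        using typical_mono[OF True that, of j] \<open>K < X N \<omega> j\<close> by linarith
    qed
    then show ?thesis
      using unb by (auto simp: unbounded_event_def)
  qed (use unb in \<open>auto simp: unbounded_event_def\<close>)
qed

text \<open>On typical outcomes the counts never decrease, so the unbounded event lies in the increasing
  union over \<open>N\<close> of the events \<open>t \<le> W (X n)\<close> for all \<open>n \<ge> N\<close>, each of which has probability
  at most \<open>W x0 / t\<close>.\<close>

lemma prob_unbounded_le:
  assumes W: "superharmonic W" and W_nonneg: "\<And>x. above_init x \<Longrightarrow> W x \<ge> 0" and t: "t > 0"
    and threshold: "\<And>x. above_init x \<Longrightarrow> K \<le> x j \<Longrightarrow> t \<le> W x"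
  shows "measure M (unbounded_event M X j) \<le> W x0 / t"
proof -
  define above_from where "above_from N = (\<Inter>n\<in>{N..}. {\<omega>\<in>space M. t \<le> W (X n \<omega>)})" for N
  have "{\<omega>\<in>space M. t \<le> W (X n \<omega>)} \<in> sets M" for n
    using sets_Collect_X[of "\<lambda>x. t \<le> W x"] .
  then have above_from_sets: "above_from N \<in> sets M" for N
    unfolding above_from_def by (intro sets.countable_INT') auto
  have above_from_le: "measure M (above_from N) \<le> W x0 / t" for N
  proof -
    have "above_from N \<subseteq> {\<omega>\<in>space M. t \<le> W (X N \<omega>)}"
      unfolding above_from_def by auto
    then have "measure M (above_from N) \<le> measure M {\<omega>\<in>space M. t \<le> W (X N \<omega>)}"
      using sets_Collect_X[of "\<lambda>x. t \<le> W x"] by (rule finite_measure_mono)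
    also have "\<dots> \<le> W x0 / t"
      by (rule prob_superharmonic_ge[OF W W_nonneg t])
    finally show ?thesis .
  qed
  have "incseq above_from"
    unfolding above_from_def incseq_def by auto
  then have "(\<lambda>N. measure M (above_from N)) \<longlonglongrightarrow> measure M (\<Union>N. above_from N)"
    using above_from_sets by (intro finite_Lim_measure_incseq) auto
  then have union_le: "measure M (\<Union>N. above_from N) \<le> W x0 / t"
    by (rule LIMSEQ_le_const2) (use above_from_le in blast)
  have "unbounded_event M X j \<subseteq> (space M - typical) \<union> (\<Union>N. above_from N)"
    using unbounded_event_subset[OF threshold] by (simp add: above_from_def)
  then have "measure M (unbounded_event M X j) \<le> measure M ((space M - typical) \<union> (\<Union>N. above_from N))"
    using above_from_sets by (intro finite_measure_mono) auto
  also have "\<dots> \<le> measure M (space M - typical) + measure M (\<Union>N. above_from N)"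
    using above_from_sets by (intro measure_Un_le) auto
  finally show ?thesis
    using measure_not_typical union_le by simp
qed

lemma sMon_sets [measurable]: "sMon A i M X \<in> sets M"
proof -
  define s where "s n \<omega> = real (\<Sum>j\<in>{1..A}-{i}. X n \<omega> j)" for n \<omega>
  have sum_measurable: "(\<lambda>x. real (\<Sum>j\<in>{1..A}-{i}. x j)) \<in> borel_measurable (count_space UNIV)"
    by simp
  have "s n \<in> borel_measurable M" for n
    using measurable_comp[OF X_measurable sum_measurable] unfolding s_def by (simp add: o_def)
  then have "{\<omega>\<in>space M. Cauchy (\<lambda>n. s n \<omega>)} \<in> sets M"
    by (rule sets_Collect_Cauchy)
  then show ?thesis
    unfolding sMon_def s_def by (simp add: Cauchy_convergent_iff convergent_def)
qed

lemma prob_sMon_ge: "measure M (sMon A i M X) \<ge> 1 - (\<Sum>j\<in>{1..A}-{i}. measure M (unbounded_event M X j))"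
proof -
  let ?J = "{1..A}-{i}"
  have "space M - sMon A i M X \<subseteq> (space M - typical) \<union> (\<Union>j\<in>?J. unbounded_event M X j)"
  proof (rule subsetI, rule ccontr)
    fix \<omega>
    assume not_sMon: "\<omega> \<in> space M - sMon A i M X"
      and "\<omega> \<notin> (space M - typical) \<union> (\<Union>j\<in>?J. unbounded_event M X j)"
    then have \<omega>_typical: "\<omega> \<in> typical" and "\<forall>j\<in>?J. \<exists>B. \<forall>n. X n \<omega> j \<le> B"
      by (auto simp: unbounded_event_def not_less)
    then obtain B where B: "\<And>j n. j \<in> ?J \<Longrightarrow> X n \<omega> j \<le> B j"
      by metis
    define s where "s n = real (\<Sum>j\<in>?J. X n \<omega> j)" for n
    have "incseq s"
      unfolding s_def incseq_def using typical_mono[OF \<omega>_typical] by (auto intro!: sum_mono)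
    moreover have "s n \<le> real (\<Sum>j\<in>?J. B j)" for n
      unfolding s_def of_nat_le_iff using B by (intro sum_mono) auto
    ultimately obtain L where "s \<longlonglongrightarrow> L"
      using incseq_convergent by blast
    then show False
      using not_sMon unfolding sMon_def s_def by auto
  qed
  then have "measure M (space M - sMon A i M X) \<le>
      measure M (space M - typical) + measure M (\<Union>j\<in>?J. unbounded_event M X j)"
    by (intro order.trans[OF finite_measure_mono measure_Un_le]) auto
  also have "measure M (\<Union>j\<in>?J. unbounded_event M X j) \<le> (\<Sum>j\<in>?J. measure M (unbounded_event M X j))"
    by (intro measure_UNION_le) auto
  finally show ?thesis
    using measure_not_typical prob_compl[OF sMon_sets] by simp
qed

lemma superharmonic_two_coords:
  assumes ij: "i \<in> {1..A}" "j \<in> {1..A}" "i \<noteq> j"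
    and drift: "\<And>x. above_init x \<Longrightarrow>
        F i (x i) * (\<Phi> (x i + 1) (x j) - \<Phi> (x i) (x j))
      + F j (x j) * (\<Phi> (x i) (x j + 1) - \<Phi> (x i) (x j)) \<le> 0"
  shows "superharmonic (\<lambda>x. \<Phi> (x i) (x j))"
  unfolding superharmonic_def
proof (intro allI impI)
  fix x assume x: "above_init x"
  let ?W = "\<lambda>x. \<Phi> (x i) (x j)"
  define S where "S = (\<Sum>j=1..A. F j (x j))"
  have "S > 0"
    unfolding S_def using ij F_pos_above_init[OF x] by (intro sum_pos) auto
  have "(\<Sum>k\<in>{1..A}. urn_prob A F x k * ?W (x(k := x k + 1))) =
      (\<Sum>k\<in>{1..A}. urn_prob A F x k * ?W x) + (\<Sum>k\<in>{1..A}. urn_prob A F x k * (?W (x(k := x k + 1)) - ?W x))"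
    by (simp add: sum.distrib[symmetric] algebra_simps)
  also have "(\<Sum>k\<in>{1..A}. urn_prob A F x k * ?W x) = ?W x"
    using urn_prob_sum[OF x] by (simp add: sum_distrib_right[symmetric])
  also have "(\<Sum>k\<in>{1..A}. urn_prob A F x k * (?W (x(k := x k + 1)) - ?W x)) =
      (\<Sum>k\<in>{i, j}. urn_prob A F x k * (?W (x(k := x k + 1)) - ?W x))"
    using ij by (intro sum.mono_neutral_right) auto
  also have "\<dots> = (F i (x i) * (\<Phi> (x i + 1) (x j) - \<Phi> (x i) (x j))
      + F j (x j) * (\<Phi> (x i) (x j + 1) - \<Phi> (x i) (x j))) / S"
    using ij unfolding urn_prob_def S_def by (simp add: add_divide_distrib)
  also have "\<dots> \<le> 0"
    using drift[OF x] \<open>S > 0\<close> by (simp add: divide_nonpos_pos)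
  finally show "(\<Sum>k\<in>{1..A}. urn_prob A F x k * ?W (x(k := x k + 1))) \<le> ?W x"
    by simp
qed

end

section \<open>Tail sums of reciprocal feedback\<close>

definition recip_tail :: "(nat \<Rightarrow> real) \<Rightarrow> nat \<Rightarrow> real" where
  "recip_tail f m = (\<Sum>l. 1 / f (l + m))"

definition recip_tail_sq :: "(nat \<Rightarrow> real) \<Rightarrow> nat \<Rightarrow> real" where
  "recip_tail_sq f m = (\<Sum>l. (1 / f (l + m))\<^sup>2)"

locale summable_recip =
  fixes f :: "nat \<Rightarrow> real"
  assumes pos: "\<And>k. k \<ge> 1 \<Longrightarrow> f k > 0"
    and summable_Suc: "summable (\<lambda>k. 1 / f (Suc k))"
begin

lemma summable_shift: "summable (\<lambda>l. 1 / f (l + m))"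
  using summable_Suc summable_iff_shift[of "\<lambda>k. 1 / f k" 1] summable_iff_shift[of "\<lambda>k. 1 / f k" m]
  by simp

lemma recip_nonneg: "m \<ge> 1 \<Longrightarrow> 1 / f m \<ge> 0"
  using pos[of m] by simp

lemma recip_tail_Suc: "recip_tail f m = 1 / f m + recip_tail f (Suc m)"
  using suminf_split_head[OF summable_shift[of m]] by (simp add: recip_tail_def)

lemma recip_tail_pos: "m \<ge> 1 \<Longrightarrow> recip_tail f m > 0"
  unfolding recip_tail_def using summable_shift pos by (intro suminf_pos) auto

lemma recip_tail_antimono:
  assumes "1 \<le> m" and "m \<le> m'"
  shows "recip_tail f m' \<le> recip_tail f m"
  using assms(2)
proof (induction m' rule: dec_induct)
  case (step n)
  then show ?case using recip_tail_Suc[of n] recip_nonneg[of n] assms(1) by linarith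
qed simp

lemma recip_tail_tendsto_0: "recip_tail f \<longlonglongrightarrow> 0"
proof (rule LIMSEQ_I)
  fix r :: real assume "r > 0"
  then show "\<exists>K. \<forall>m\<ge>K. norm (recip_tail f m - 0) < r"
    using suminf_exist_split[of r "\<lambda>k. 1 / f k"] summable_shift[of 0] by (simp add: recip_tail_def)
qed

lemma tail_sum_eq_recip_tail: "(\<Sum>l. ereal (1 / f (l + m))) = ereal (recip_tail f m)"
  unfolding recip_tail_def by (rule suminf_ereal'[OF summable_shift])

lemma summable_recip_sq: "summable (\<lambda>l. (1 / f (l + m))\<^sup>2)"
proof (rule summable_comparison_test_ev[OF _ summable_shift])
  have "(\<lambda>l. 1 / f (l + m)) \<longlonglongrightarrow> 0"
    using summable_LIMSEQ_zero[OF summable_shift] .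
  then have "eventually (\<lambda>l. 1 / f (l + m) < 1) sequentially"
    by (rule order_tendstoD) simp
  then show "eventually (\<lambda>l. norm ((1 / f (l + m))\<^sup>2) \<le> 1 / f (l + m)) sequentially"
    using eventually_ge_at_top[of 1]
  proof eventually_elim
    case (elim l)
    then have "0 \<le> 1 / f (l + m)"
      using recip_nonneg[of "l + m"] by simp
    with elim have "(1 / f (l + m)) * (1 / f (l + m)) \<le> 1 / f (l + m) * 1"
      by (intro mult_left_mono) auto
    then show ?case
      by (simp add: power2_eq_square)
  qed
qed

lemma recip_tail_sq_Suc: "recip_tail_sq f m = (1 / f m)\<^sup>2 + recip_tail_sq f (Suc m)"
  using suminf_split_head[OF summable_recip_sq[of m]] by (simp add: recip_tail_sq_def)

lemma recip_tail_sq_nonneg: "recip_tail_sq f m \<ge> 0"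
  unfolding recip_tail_sq_def using summable_recip_sq by (intro suminf_nonneg) auto

text \<open>For type P feedback, \<open>1 / f k \<le> e * recip_tail f k\<close> eventually; summing this against
  \<open>1 / f\<close> over the tail gives the bound.\<close>

lemma recip_tail_sq_little_o:
  assumes typeP: "filterlim (\<lambda>k. f k * recip_tail f k) at_top sequentially" and e: "e > 0"
  shows "eventually (\<lambda>m. recip_tail_sq f m \<le> e * (recip_tail f m)\<^sup>2) sequentially"
proof -
  obtain K where K: "K \<ge> 1" "\<And>k. k \<ge> K \<Longrightarrow> 1 / e \<le> f k * recip_tail f k"
    using typeP eventually_ge_at_top[of 1] unfolding filterlim_at_top eventually_at_top_linorder
    by (metis (full_types) order.trans le_cases)
  have small: "1 / f k \<le> e * recip_tail f k" if "k \<ge> K" for k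
    using K(2)[OF that] pos[of k] e K(1) that by (simp add: field_simps)
  have "recip_tail_sq f m \<le> e * (recip_tail f m)\<^sup>2" if m: "m \<ge> K" for m
  proof -
    have "(1 / f (l + m))\<^sup>2 \<le> (e * recip_tail f m) * (1 / f (l + m))" for l
    proof -
      have "1 / f (l + m) \<le> e * recip_tail f (l + m)"
        by (rule small) (use m in simp)
      also have "\<dots> \<le> e * recip_tail f m"
        using recip_tail_antimono[of m "l + m"] m K(1) e by (simp add: mult_left_mono)
      finally have bound: "1 / f (l + m) \<le> e * recip_tail f m" .
      have nonneg: "0 \<le> 1 / f (l + m)"
        using recip_nonneg[of "l + m"] m K(1) by simp
      show ?thesis
        using mult_right_mono[OF bound nonneg] by (simp add: power2_eq_square)
    qed
    then have "recip_tail_sq f m \<le> (\<Sum>l. (e * recip_tail f m) * (1 / f (l + m)))"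
      unfolding recip_tail_sq_def using summable_recip_sq summable_shift
      by (intro suminf_le summable_mult) auto
    also have "\<dots> = e * (recip_tail f m)\<^sup>2"
      using suminf_mult[OF summable_shift[of m], of "e * recip_tail f m"]
      by (simp add: recip_tail_def power2_eq_square)
    finally show ?thesis .
  qed
  then show ?thesis
    unfolding eventually_at_top_linorder by blast
qed

end

lemma partial_sums_unbounded:
  fixes f :: "nat \<Rightarrow> real"
  assumes "\<And>n. f n \<ge> 0" and "\<not> summable f"
  obtains K where "(\<Sum>l<K. f l) \<ge> C"
  using assms summableI_nonneg_bounded[of f C] by (meson nle_le)

lemma escape_bound_arith:
  fixes Ri Rj Ti Tj c e :: real
  assumes Ri: "Ri > 0" and Rj: "Rj > 0" and ratio: "Ri < c * Rj" and c: "c < 1" and e: "e > 0"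
    and Ti: "0 \<le> Ti" "Ti \<le> e * Ri\<^sup>2" and Tj: "0 \<le> Tj" "Tj \<le> e * Rj\<^sup>2"
  shows "4 * (Tj + Ti) / (Rj - Ri)\<^sup>2 \<le> 8 * e / (1 - c)\<^sup>2"
proof -
  have "c * Rj < Rj"
    using mult_strict_right_mono[OF c Rj] by simp
  then have "Ri\<^sup>2 \<le> Rj\<^sup>2"
    using Ri ratio by (intro power_mono) auto
  then have "e * Ri\<^sup>2 \<le> e * Rj\<^sup>2"
    using e by (intro mult_left_mono) auto
  then have num: "4 * (Tj + Ti) \<le> 8 * (e * Rj\<^sup>2)"
    using Ti Tj by smt
  have gap_pos: "(1 - c) * Rj > 0"
    using c Rj by simp
  have den: "((1 - c) * Rj)\<^sup>2 \<le> (Rj - Ri)\<^sup>2"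
    using ratio gap_pos by (intro power_mono) (auto simp: algebra_simps)
  have den_pos: "((1 - c) * Rj)\<^sup>2 > 0"
    using c Rj by simp
  have "4 * (Tj + Ti) / (Rj - Ri)\<^sup>2 \<le> 4 * (Tj + Ti) / ((1 - c) * Rj)\<^sup>2"
    using den den_pos Ti Tj by (intro divide_left_mono mult_pos_pos) auto
  also have "\<dots> \<le> 8 * (e * Rj\<^sup>2) / ((1 - c) * Rj)\<^sup>2"
    using num den_pos by (intro divide_right_mono) auto
  also have "\<dots> = 8 * e / (1 - c)\<^sup>2"
    using Ri Rj by (simp add: power_mult_distrib)
  finally show ?thesis .
qed

section \<open>Escape probabilities of a single agent\<close>

context polya_urn
begin

lemma summable_recip_F: "j \<in> {1..A} \<Longrightarrow> condM F j \<Longrightarrow> summable_recip (F j)"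
  by unfold_locales (auto simp: F_pos condM_def)

text \<open>Each of the two increments is \<open>\<plusminus>2 Y / F\<close> with \<open>Y\<close> the term inside the square, and the
  squared tail sums absorb the second-order terms exactly, so the drift is zero.\<close>

lemma superharmonic_tail_quadratic:
  assumes ij: "i \<in> {1..A}" "j \<in> {1..A}" "i \<noteq> j"
    and Fi: "summable_recip (F i)" and Fj: "summable_recip (F j)"
  shows "superharmonic (\<lambda>x. (recip_tail (F j) (x j) - recip_tail (F i) (x i) - D)\<^sup>2
      + recip_tail_sq (F j) (x j) + recip_tail_sq (F i) (x i))"
proof -
  interpret ti: summable_recip "F i" by (rule Fi)
  interpret tj: summable_recip "F j" by (rule Fj)
  define \<Phi> where "\<Phi> a b =
      (recip_tail (F j) b - recip_tail (F i) a - D)\<^sup>2 + recip_tail_sq (F j) b + recip_tail_sq (F i) a" for a b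
  have "superharmonic (\<lambda>x. \<Phi> (x i) (x j))"
  proof (rule superharmonic_two_coords[OF ij])
    fix x assume x: "above_init x"
    define Y where "Y = recip_tail (F j) (x j) - recip_tail (F i) (x i) - D"
    have inc_i: "\<Phi> (x i + 1) (x j) - \<Phi> (x i) (x j) = 2 * Y * (1 / F i (x i))"
      unfolding \<Phi>_def Y_def using ti.recip_tail_Suc[of "x i"] ti.recip_tail_sq_Suc[of "x i"]
      by (simp add: power2_eq_square algebra_simps)
    have inc_j: "\<Phi> (x i) (x j + 1) - \<Phi> (x i) (x j) = - 2 * Y * (1 / F j (x j))"
      unfolding \<Phi>_def Y_def using tj.recip_tail_Suc[of "x j"] tj.recip_tail_sq_Suc[of "x j"]
      by (simp add: power2_eq_square algebra_simps)
    have "F i (x i) > 0" "F j (x j) > 0"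
      using F_pos_above_init[OF x] ij by auto
    then show "F i (x i) * (\<Phi> (x i + 1) (x j) - \<Phi> (x i) (x j))
        + F j (x j) * (\<Phi> (x i) (x j + 1) - \<Phi> (x i) (x j)) \<le> 0"
      unfolding inc_i inc_j by (simp add: field_simps)
  qed
  then show ?thesis
    by (simp add: \<Phi>_def)
qed

lemma prob_unbounded_le_summable:
  assumes ij: "i \<in> {1..A}" "j \<in> {1..A}" "i \<noteq> j"
    and Mi: "condM F i" and Mj: "condM F j"
    and D_pos: "recip_tail (F i) (x0 i) < recip_tail (F j) (x0 j)"
  shows "measure M (unbounded_event M X j) \<le>
    4 * (recip_tail_sq (F j) (x0 j) + recip_tail_sq (F i) (x0 i)) /
      (recip_tail (F j) (x0 j) - recip_tail (F i) (x0 i))\<^sup>2"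
proof -
  have Fi: "summable_recip (F i)" and Fj: "summable_recip (F j)"
    using summable_recip_F ij Mi Mj by blast+
  interpret ti: summable_recip "F i" by (rule Fi)
  interpret tj: summable_recip "F j" by (rule Fj)
  define D where "D = recip_tail (F j) (x0 j) - recip_tail (F i) (x0 i)"
  have D: "D > 0" using D_pos D_def by simp
  define W where "W x = (recip_tail (F j) (x j) - recip_tail (F i) (x i) - D)\<^sup>2
      + recip_tail_sq (F j) (x j) + recip_tail_sq (F i) (x i)" for x
  obtain K where K: "\<And>m. m \<ge> K \<Longrightarrow> recip_tail (F j) m < D / 2"
    using order_tendstoD(2)[OF tj.recip_tail_tendsto_0, of "D / 2"] D
    unfolding eventually_at_top_linorder by auto
  have "D\<^sup>2 / 4 \<le> W x" if x: "above_init x" and "K \<le> x j" for x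
  proof -
    have "recip_tail (F i) (x i) \<ge> 0"
      using ti.recip_tail_pos above_init_ge_1[OF x ij(1)] less_imp_le by blast
    then have "(D / 2)\<^sup>2 \<le> (- (recip_tail (F j) (x j) - recip_tail (F i) (x i) - D))\<^sup>2"
      using K[OF \<open>K \<le> x j\<close>] D by (intro power_mono) linarith+
    then have "D\<^sup>2 / 4 \<le> (recip_tail (F j) (x j) - recip_tail (F i) (x i) - D)\<^sup>2"
      by (simp only: power2_minus power_divide) simp
    then show ?thesis
      unfolding W_def using ti.recip_tail_sq_nonneg[of "x i"] tj.recip_tail_sq_nonneg[of "x j"]
      by linarith
  qed
  moreover have "superharmonic W"
    unfolding W_def[abs_def] by (rule superharmonic_tail_quadratic[OF ij Fi Fj])
  moreover have "W x \<ge> 0" for x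
    unfolding W_def using ti.recip_tail_sq_nonneg tj.recip_tail_sq_nonneg by (simp add: add_nonneg_nonneg)
  ultimately have "measure M (unbounded_event M X j) \<le> W x0 / (D\<^sup>2 / 4)"
    using D by (intro prob_unbounded_le) auto
  also have "W x0 = recip_tail_sq (F j) (x0 j) + recip_tail_sq (F i) (x0 i)"
    unfolding W_def D_def by simp
  finally show ?thesis
    unfolding D_def by (simp add: algebra_simps)
qed

lemma prob_unbounded_le_of_ratio:
  assumes ij: "i \<in> {1..A}" "j \<in> {1..A}" "i \<noteq> j"
    and Mi: "condM F i" and Mj: "condM F j" and e: "e > 0" and c: "c < 1"
    and ratio: "recip_tail (F i) (x0 i) < c * recip_tail (F j) (x0 j)"
    and Ti: "recip_tail_sq (F i) (x0 i) \<le> e * (recip_tail (F i) (x0 i))\<^sup>2"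
    and Tj: "recip_tail_sq (F j) (x0 j) \<le> e * (recip_tail (F j) (x0 j))\<^sup>2"
  shows "measure M (unbounded_event M X j) \<le> 8 * e / (1 - c)\<^sup>2"
proof -
  interpret ti: summable_recip "F i" using summable_recip_F ij Mi by blast
  interpret tj: summable_recip "F j" using summable_recip_F ij Mj by blast
  have pos: "recip_tail (F i) (x0 i) > 0" "recip_tail (F j) (x0 j) > 0"
    using ti.recip_tail_pos tj.recip_tail_pos x0_pos ij by auto
  moreover have "c * recip_tail (F j) (x0 j) < recip_tail (F j) (x0 j)"
    using mult_strict_right_mono[OF c pos(2)] by simp
  ultimately have "recip_tail (F i) (x0 i) < recip_tail (F j) (x0 j)"
    using ratio by linarith
  then have "measure M (unbounded_event M X j) \<le>
      4 * (recip_tail_sq (F j) (x0 j) + recip_tail_sq (F i) (x0 i)) /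
        (recip_tail (F j) (x0 j) - recip_tail (F i) (x0 i))\<^sup>2"
    by (rule prob_unbounded_le_summable[OF ij Mi Mj])
  also have "\<dots> \<le> 8 * e / (1 - c)\<^sup>2"
    using pos ratio c e Ti Tj ti.recip_tail_sq_nonneg tj.recip_tail_sq_nonneg
    by (intro escape_bound_arith) auto
  finally show ?thesis .
qed

text \<open>Capping the partial sums of \<open>1 / F j\<close> at \<open>K\<close> turns the zero drift of the uncapped
  difference into a nonpositive one.\<close>

lemma superharmonic_capped_partial_sums:
  assumes ij: "i \<in> {1..A}" "j \<in> {1..A}" "i \<noteq> j"
  shows "superharmonic (\<lambda>x. (\<Sum>l<min (x j) K - x0 j. 1 / F j (l + x0 j))
      - (\<Sum>l<x i - x0 i. 1 / F i (l + x0 i)) + c)"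
proof -
  define \<Phi> where "\<Phi> a b = (\<Sum>l<min b K - x0 j. 1 / F j (l + x0 j)) - (\<Sum>l<a - x0 i. 1 / F i (l + x0 i)) + c"
    for a b
  have "superharmonic (\<lambda>x. \<Phi> (x i) (x j))"
  proof (rule superharmonic_two_coords[OF ij])
    fix x assume x: "above_init x"
    then have a: "x i \<ge> x0 i" and b: "x j \<ge> x0 j"
      unfolding above_init_def by auto
    have "x i + 1 - x0 i = Suc (x i - x0 i)"
      using a by simp
    then have "\<Phi> (x i + 1) (x j) - \<Phi> (x i) (x j) = - (1 / F i (x i))"
      unfolding \<Phi>_def using a by simp
    then have "F i (x i) * (\<Phi> (x i + 1) (x j) - \<Phi> (x i) (x j)) = -1"
      using F_pos_above_init[OF x ij(1)] by simp
    moreover have "\<Phi> (x i) (x j + 1) - \<Phi> (x i) (x j) \<le> 1 / F j (x j)"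
    proof (cases "x j < K")
      case True
      then have "min (x j + 1) K - x0 j = Suc (min (x j) K - x0 j)" "min (x j) K = x j"
        using b by auto
      then show ?thesis
        unfolding \<Phi>_def using b by (simp add: Suc_diff_le)
    next
      case False
      then have "min (x j + 1) K = min (x j) K"
        by simp
      then show ?thesis
        unfolding \<Phi>_def using F_pos_above_init[OF x ij(2)] by simp
    qed
    then have "F j (x j) * (\<Phi> (x i) (x j + 1) - \<Phi> (x i) (x j)) \<le> 1"
      using F_pos_above_init[OF x ij(2)] by (simp add: field_simps)
    ultimately show "F i (x i) * (\<Phi> (x i + 1) (x j) - \<Phi> (x i) (x j))
        + F j (x j) * (\<Phi> (x i) (x j + 1) - \<Phi> (x i) (x j)) \<le> 0"
      by linarith
  qed
  then show ?thesis
    by (simp add: \<Phi>_def)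
qed

text \<open>The cap \<open>K\<close> can be chosen so large that the threshold \<open>C\<close> exceeds \<open>W x0 / e\<close>.\<close>

lemma prob_unbounded_eq_0_not_summable:
  assumes ij: "i \<in> {1..A}" "j \<in> {1..A}" "i \<noteq> j"
    and Mi: "condM F i" and not_Mj: "\<not> condM F j"
  shows "measure M (unbounded_event M X j) = 0"
proof -
  interpret ti: summable_recip "F i" using summable_recip_F ij Mi by blast
  define f where "f l = 1 / F j (l + x0 j)" for l
  define g where "g l = 1 / F i (l + x0 i)" for l
  have x0_ij: "x0 i \<ge> 1" "x0 j \<ge> 1" using x0_pos ij by auto
  have f_nonneg: "f l \<ge> 0" for l
    unfolding f_def using F_pos[OF ij(2), of "l + x0 j"] x0_ij by simp
  have g_nonneg: "g l \<ge> 0" for l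
    unfolding g_def using F_pos[OF ij(1), of "l + x0 i"] x0_ij by simp
  have "\<not> summable f"
    using not_Mj summable_iff_shift[of "\<lambda>k. 1 / F j k" 1] summable_iff_shift[of "\<lambda>k. 1 / F j k" "x0 j"]
    unfolding f_def condM_def by simp
  have g_partial_le: "(\<Sum>l<n. g l) \<le> recip_tail (F i) (x0 i)" for n
    unfolding recip_tail_def g_def using ti.summable_shift g_nonneg[unfolded g_def]
    by (intro sum_le_suminf) auto
  have "measure M (unbounded_event M X j) \<le> e" if e: "e > 0" for e
  proof -
    define C where "C = recip_tail (F i) (x0 i) / e + 1"
    have C: "C > 0"
      unfolding C_def using ti.recip_tail_pos[OF x0_ij(1)] e by (simp add: add_pos_pos)
    obtain K' where K': "(\<Sum>l<K'. f l) \<ge> C"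
      using partial_sums_unbounded[OF f_nonneg \<open>\<not> summable f\<close>] by blast
    define K where "K = K' + x0 j"
    define W where "W x = (\<Sum>l<min (x j) K - x0 j. f l) - (\<Sum>l<x i - x0 i. g l) + recip_tail (F i) (x0 i)"
      for x
    have "superharmonic W"
      unfolding W_def[abs_def] f_def g_def by (rule superharmonic_capped_partial_sums[OF ij])
    moreover have "W x \<ge> 0" for x
    proof -
      have "0 \<le> (\<Sum>l<min (x j) K - x0 j. f l)"
        using f_nonneg by (simp add: sum_nonneg)
      then show ?thesis
        unfolding W_def using g_partial_le[of "x i - x0 i"] by linarith
    qed
    moreover have "C \<le> W x" if "K \<le> x j" for x
    proof -
      have "min (x j) K - x0 j = K'"
        using that K_def by simp
      then show ?thesis
        unfolding W_def using g_partial_le[of "x i - x0 i"] K' by simp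
    qed
    ultimately have "measure M (unbounded_event M X j) \<le> W x0 / C"
      using C by (intro prob_unbounded_le) auto
    also have "W x0 = recip_tail (F i) (x0 i)"
      by (simp add: W_def)
    also have "recip_tail (F i) (x0 i) / C \<le> e"
    proof -
      have "recip_tail (F i) (x0 i) \<le> e * C"
        unfolding C_def using e by (simp add: field_simps)
      then show ?thesis
        using C by (simp add: divide_le_eq mult.commute)
    qed
    finally show ?thesis .
  qed
  then have "measure M (unbounded_event M X j) \<le> 0"
    by (metis add.left_neutral field_le_epsilon)
  then show ?thesis
    using measure_nonneg[of M "unbounded_event M X j"] by linarith
qed

end

section \<open>The limit of large initial configurations\<close>

lemma filterlim_urn_init: "chi j > 0 \<Longrightarrow> filterlim (\<lambda>N. urn_init chi N j) at_top sequentially"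
proof (subst filterlim_at_top, intro allI)
  fix K :: nat assume chi: "chi j > 0"
  have "eventually (\<lambda>N. real N \<ge> (real K + 1) / chi j) sequentially"
    using eventually_ge_at_top[of "nat \<lceil>(real K + 1) / chi j\<rceil>"]
    by eventually_elim (meson of_nat_le_iff order_trans real_nat_ceiling_ge)
  then show "eventually (\<lambda>N. K \<le> urn_init chi N j) sequentially"
  proof eventually_elim
    case (elim N)
    then have "chi j * real N \<ge> real K + 1"
      using chi by (simp add: field_simps)
    then have "round (chi j * real N) \<ge> int K"
      using of_int_round_ge[of "chi j * real N"] by linarith
    then show ?case
      unfolding urn_init_def by linarith
  qed
qed

lemma eventually_recip_tail_ratio_less:
  assumes Fi: "summable_recip (F i)" and Fj: "summable_recip (F j)"
    and chi: "chi i > 0" "chi j > 0"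
    and ratio: "limsup (\<lambda>N. tail_sum F i (urn_init chi N i) / tail_sum F j (urn_init chi N j)) < ereal c"
  shows "eventually (\<lambda>N. recip_tail (F i) (urn_init chi N i) < c * recip_tail (F j) (urn_init chi N j))
    sequentially"
proof -
  have "eventually (\<lambda>N. 1 \<le> urn_init chi N i \<and> 1 \<le> urn_init chi N j) sequentially"
    using filterlim_urn_init[of chi i, OF chi(1)] filterlim_urn_init[of chi j, OF chi(2)]
    unfolding filterlim_at_top by (intro eventually_conj) auto
  with Limsup_lessD[OF ratio] show ?thesis
  proof eventually_elim
    case (elim N)
    then have pos: "0 < recip_tail (F i) (urn_init chi N i)" "0 < recip_tail (F j) (urn_init chi N j)"
      using summable_recip.recip_tail_pos[OF Fi] summable_recip.recip_tail_pos[OF Fj] by auto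
    with elim(1) show ?case
      by (simp add: tail_sum_def summable_recip.tail_sum_eq_recip_tail[OF Fi]
          summable_recip.tail_sum_eq_recip_tail[OF Fj] ereal_divide divide_less_eq)
  qed
qed

lemma prob_unbounded_tendsto_0_summable:
  assumes urns: "eventually (\<lambda>N. polya_urn A F (M N) (X N) (urn_init chi N)) sequentially"
    and ij: "i \<in> {1..A}" "j \<in> {1..A}" "i \<noteq> j"
    and Fi: "summable_recip (F i)" and Fj: "summable_recip (F j)"
    and Pi: "typeP F i" and Pj: "typeP F j"
    and chi: "chi i > 0" "chi j > 0"
    and ratio: "limsup (\<lambda>N. tail_sum F i (urn_init chi N i) / tail_sum F j (urn_init chi N j)) < 1"
  shows "(\<lambda>N. measure (M N) (unbounded_event (M N) (X N) j)) \<longlonglongrightarrow> 0"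
proof (rule tendstoI)
  fix e :: real assume e: "e > 0"
  define Ri where "Ri N = recip_tail (F i) (urn_init chi N i)" for N
  define Rj where "Rj N = recip_tail (F j) (urn_init chi N j)" for N
  obtain c where c_limsup: "limsup (\<lambda>N. tail_sum F i (urn_init chi N i) / tail_sum F j (urn_init chi N j)) < ereal c"
    and c: "c < 1"
    using ereal_dense2[OF ratio] by auto
  define ep where "ep = e * (1 - c)\<^sup>2 / 16"
  have ep: "ep > 0"
    unfolding ep_def using e c by simp
  have "eventually (\<lambda>N. recip_tail_sq (F i) (urn_init chi N i) \<le> ep * (Ri N)\<^sup>2) sequentially"
    unfolding Ri_def using Pi ep
    by (intro eventually_compose_filterlim[OF _ filterlim_urn_init[of chi i, OF chi(1)]]
        summable_recip.recip_tail_sq_little_o[OF Fi]) (simp_all add: typeP_def recip_tail_def)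
  moreover have "eventually (\<lambda>N. recip_tail_sq (F j) (urn_init chi N j) \<le> ep * (Rj N)\<^sup>2) sequentially"
    unfolding Rj_def using Pj ep
    by (intro eventually_compose_filterlim[OF _ filterlim_urn_init[of chi j, OF chi(2)]]
        summable_recip.recip_tail_sq_little_o[OF Fj]) (simp_all add: typeP_def recip_tail_def)
  moreover have "eventually (\<lambda>N. Ri N < c * Rj N) sequentially"
    unfolding Ri_def Rj_def by (rule eventually_recip_tail_ratio_less[OF Fi Fj chi c_limsup])
  ultimately show "eventually (\<lambda>N. dist (measure (M N) (unbounded_event (M N) (X N) j)) 0 < e) sequentially"
    using urns
  proof eventually_elim
    case (elim N)
    have "measure (M N) (unbounded_event (M N) (X N) j) \<le> 8 * ep / (1 - c)\<^sup>2"
      using elim(1-3) ij Pi Pj ep c unfolding Ri_def Rj_def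
      by (intro polya_urn.prob_unbounded_le_of_ratio[OF elim(4)]) (auto simp: typeP_def)
    also have "\<dots> < e"
      using e c by (simp add: ep_def)
    finally show ?case
      by simp
  qed
qed

lemma prob_unbounded_tendsto_0:
  assumes urns: "eventually (\<lambda>N. polya_urn A F (M N) (X N) (urn_init chi N)) sequentially"
    and ij: "i \<in> {1..A}" "j \<in> {1..A}" "i \<noteq> j"
    and F_pos: "\<And>j k. j \<in> {1..A} \<Longrightarrow> k \<ge> 1 \<Longrightarrow> F j k > 0"
    and Pi: "typeP F i" and Pj: "typeP F j \<or> \<not> condM F j"
    and chi: "chi i > 0" "chi j > 0"
    and ratio: "limsup (\<lambda>N. tail_sum F i (urn_init chi N i) / tail_sum F j (urn_init chi N j)) < 1"
  shows "(\<lambda>N. measure (M N) (unbounded_event (M N) (X N) j)) \<longlonglongrightarrow> 0"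
proof (cases "condM F j")
  case False
  have Mi: "condM F i"
    using Pi by (simp add: typeP_def)
  have "eventually (\<lambda>N. measure (M N) (unbounded_event (M N) (X N) j) = 0) sequentially"
    using urns by eventually_elim (rule polya_urn.prob_unbounded_eq_0_not_summable[OF _ ij Mi False])
  then show ?thesis
    by (rule tendsto_eventually)
next
  case True
  have Fi: "summable_recip (F i)"
    using F_pos ij Pi by unfold_locales (auto simp: typeP_def condM_def)
  have Fj: "summable_recip (F j)"
    using F_pos ij True by unfold_locales (auto simp: condM_def)
  show ?thesis
    using prob_unbounded_tendsto_0_summable[OF urns ij Fi Fj Pi _ chi ratio] Pj True by blast
qed

theorem mainTheorem5:
  fixes A :: nat and F :: "nat \<Rightarrow> nat \<Rightarrow> real" and chi :: "nat \<Rightarrow> real" and i :: nat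
    and M :: "nat \<Rightarrow> 'w measure" and X :: "nat \<Rightarrow> nat \<Rightarrow> 'w \<Rightarrow> (nat \<Rightarrow> nat)"
  assumes "A \<ge> 2"
    and "\<forall>j\<in>{1..A}. \<forall>k\<ge>1. F j k > 0"
    and "\<forall>j\<in>{1..A}. typeP F j \<or> \<not> condM F j"
    and "i \<in> {1..A}" and "typeP F i"
    and "\<forall>j\<in>{1..A}. chi j > 0" and "(\<Sum>j=1..A. chi j) = 1"
    and "\<forall>j\<in>{1..A}-{i}.
           limsup (\<lambda>N. tail_sum F i (urn_init chi N i) / tail_sum F j (urn_init chi N j)) < 1"
    and "\<forall>N. (\<forall>j\<in>{1..A}. urn_init chi N j \<ge> 1) \<longrightarrow>
           is_urn_process A F (M N) (X N) (urn_init chi N)"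
  shows "(\<lambda>N. measure (M N) (sMon A i (M N) (X N))) \<longlonglongrightarrow> 1"
proof -
  let ?bad = "\<lambda>N. \<Sum>j\<in>{1..A}-{i}. measure (M N) (unbounded_event (M N) (X N) j)"
  have "eventually (\<lambda>N. urn_init chi N j \<ge> 1) sequentially" if "j \<in> {1..A}" for j
    using filterlim_urn_init[of chi j] assms(6) that unfolding filterlim_at_top by blast
  then have "eventually (\<lambda>N. \<forall>j\<in>{1..A}. urn_init chi N j \<ge> 1) sequentially"
    by (intro eventually_ball_finite) auto
  then have urns: "eventually (\<lambda>N. polya_urn A F (M N) (X N) (urn_init chi N)) sequentially"
  proof eventually_elim
    case (elim N)
    show ?case
      by (intro polya_urn.intro) (use assms(1,2,9) elim in auto)
  qed
  have "(\<lambda>N. measure (M N) (unbounded_event (M N) (X N) j)) \<longlonglongrightarrow> 0" if "j \<in> {1..A} - {i}" for j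
    by (rule prob_unbounded_tendsto_0[OF urns]) (use that assms(2-6,8) in auto)
  then have "?bad \<longlonglongrightarrow> 0"
    by (rule tendsto_null_sum)
  then have lim: "(\<lambda>N. 1 - ?bad N) \<longlonglongrightarrow> 1"
    using tendsto_diff[OF tendsto_const[of 1]] by fastforce
  have lower: "eventually (\<lambda>N. 1 - ?bad N \<le> measure (M N) (sMon A i (M N) (X N))) sequentially"
    using urns by eventually_elim (rule polya_urn.prob_sMon_ge)
  have upper: "eventually (\<lambda>N. measure (M N) (sMon A i (M N) (X N)) \<le> 1) sequentially"
    using urns by eventually_elim (simp add: polya_urn_def is_urn_process_def prob_space.prob_le_1)
  show ?thesis
    by (rule tendsto_sandwich[OF lower upper lim tendsto_const])
qed

end
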